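(* For every finite simple undirected graph $G$, the graph $\mathsf{TJ}_{\omega(G)}(G)$ does not contain a diamond ($K_4$ minus one edge) as an induced subgraph.
   Context: $\omega(G)$ is the maximum size of a clique of $G$. $\mathsf{TJ}_k(G)$ is the graph whose vertices are the cliques of $G$ of size $k$, two such cliques $C, C'$ being adjacent iff $|C \setminus C'| = |C' \setminus C| = 1$. *)

theory Defs
  imports Main
begin

definition simple_graph :: "'a set \<Rightarrow> ('a \<Rightarrow> 'a \<Rightarrow> bool) \<Rightarrow> bool" where
  "simple_graph V E \<longleftrightarrow> finite V \<and> (\<forall>x y. E x y \<longrightarrow> x \<in> V \<and> y \<in> V)
     \<and> (\<forall>x y. E x y \<longrightarrow> E y x) \<and> (\<forall>x. \<not> E x x)"

definition is_clique :: "'a set \<Rightarrow> ('a \<Rightarrow> 'a \<Rightarrow> bool) \<Rightarrow> 'a set \<Rightarrow> bool" where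
  "is_clique V E C \<longleftrightarrow> C \<subseteq> V \<and> (\<forall>x\<in>C. \<forall>y\<in>C. x \<noteq> y \<longrightarrow> E x y)"

definition clique_number :: "'a set \<Rightarrow> ('a \<Rightarrow> 'a \<Rightarrow> bool) \<Rightarrow> nat" where
  "clique_number V E = Max {card C | C. is_clique V E C}"

definition TJ_vertices :: "'a set \<Rightarrow> ('a \<Rightarrow> 'a \<Rightarrow> bool) \<Rightarrow> nat \<Rightarrow> 'a set set" where
  "TJ_vertices V E k = {C. is_clique V E C \<and> card C = k}"

definition TJ_edge :: "'a set \<Rightarrow> ('a \<Rightarrow> 'a \<Rightarrow> bool) \<Rightarrow> nat \<Rightarrow> 'a set \<Rightarrow> 'a set \<Rightarrow> bool" where
  "TJ_edge V E k C D \<longleftrightarrow> C \<in> TJ_vertices V E k \<and> D \<in> TJ_vertices V E k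
     \<and> card (C - D) = 1 \<and> card (D - C) = 1"

definition has_induced_diamond :: "'b set \<Rightarrow> ('b \<Rightarrow> 'b \<Rightarrow> bool) \<Rightarrow> bool" where
  "has_induced_diamond W F \<longleftrightarrow> (\<exists>a\<in>W. \<exists>b\<in>W. \<exists>c\<in>W. \<exists>d\<in>W.
     distinct [a, b, c, d] \<and> F a b \<and> F a c \<and> F a d \<and> F b c \<and> F b d \<and> \<not> F c d)"

end

theory Submission
  imports Defs
begin

text \<open>Let \<open>A\<close>, \<open>B\<close> be adjacent in \<open>TJ\<^sub>\<omega>(G)\<close>, with \<open>A - B = {a}\<close> and \<open>B - A = {b}\<close>.
  Since \<open>A \<union> B\<close> has \<open>\<omega> + 1\<close> vertices it is not a clique, so \<open>a\<close> and \<open>b\<close> are not adjacent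
  and no clique contains both. Hence every common neighbour \<open>C\<close> of \<open>A\<close> and \<open>B\<close> contains
  \<open>A \<inter> B\<close>: a vertex of \<open>A \<inter> B\<close> missing from \<open>C\<close> would be the only vertex of \<open>A\<close> (and of \<open>B\<close>)
  missing from \<open>C\<close>, forcing \<open>a, b \<in> C\<close>. So all common neighbours are of the form
  \<open>insert c (A \<inter> B)\<close>, and any two of them are adjacent: there is no induced diamond.\<close>

lemma card_Diff_commute:
  assumes "finite A" "finite B" "card A = card B"
  shows "card (A - B) = card (B - A)"
  using assms by (simp add: card_Diff_subset_Int Int_commute)

lemma Int_subset_if_card_Diff_eq_1:
  assumes "finite A" "finite B" "finite C"
    and "card A = card C" "card B = card C"
    and "A - B = {a}" "B - A = {b}"
    and "card (C - A) = 1" "card (C - B) = 1"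
    and "\<not> (a \<in> C \<and> b \<in> C)"
  shows "A \<inter> B \<subseteq> C"
proof
  fix x assume x: "x \<in> A \<inter> B"
  show "x \<in> C"
  proof (rule ccontr)
    assume "x \<notin> C"
    have "card (A - C) = 1" "card (B - C) = 1"
      using assms card_Diff_commute by metis+
    with x \<open>x \<notin> C\<close> have "A - C = {x}" "B - C = {x}"
      by (metis DiffI IntD1 IntD2 card_1_singletonE singletonD)+
    then have "a \<in> C" "b \<in> C"
      using x \<open>A - B = {a}\<close> \<open>B - A = {b}\<close> by blast+
    with \<open>\<not> (a \<in> C \<and> b \<in> C)\<close> show False by blast
  qed
qed

lemma card_Diff_eq_1_if_common_subset:
  assumes "finite C" "finite D" "S \<subseteq> C \<inter> D"
    and "card C = card S + 1" "card D = card C" "C \<noteq> D"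
  shows "card (C - D) = 1"
proof -
  have "finite S" using assms(1,3) finite_subset by blast
  then have "card (C - S) = 1"
    using assms(3,4) by (simp add: card_Diff_subset le_infI1)
  moreover have "C - D \<subseteq> C - S" using assms(3) by blast
  moreover have "C - D \<noteq> {}"
    using assms(1,2,5,6) card_subset_eq by (metis Diff_eq_empty_iff)
  ultimately show ?thesis
    using assms(1) by (metis card_0_eq card_mono finite_Diff le_neq_implies_less less_one)
qed

lemma card_le_clique_number:
  assumes "finite V" "is_clique V E C"
  shows "card C \<le> clique_number V E"
proof -
  have "{card C | C. is_clique V E C} \<subseteq> {0..card V}"
    using assms(1) by (auto simp: is_clique_def card_mono)
  then have "finite {card C | C. is_clique V E C}" using finite_subset by blast
  then show ?thesis unfolding clique_number_def using assms(2) by (auto intro: Max_ge)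
qed

lemma is_clique_Un_if_Diff_adjacent:
  assumes "is_clique V E A" "is_clique V E B" "A - B = {a}" "B - A = {b}"
    and "E a b" "E b a"
  shows "is_clique V E (A \<union> B)"
  unfolding is_clique_def
proof (intro conjI ballI impI)
  show "A \<union> B \<subseteq> V" using assms(1,2) by (simp add: is_clique_def)
  have clique: "E x y" if "x \<in> A \<and> y \<in> A \<or> x \<in> B \<and> y \<in> B" "x \<noteq> y" for x y
    using that assms(1,2) by (auto simp: is_clique_def)
  fix x y assume "x \<in> A \<union> B" "y \<in> A \<union> B" "x \<noteq> y"
  then consider "x \<in> A \<and> y \<in> A \<or> x \<in> B \<and> y \<in> B" | "x = a" "y = b" | "x = b" "y = a"
    using assms(3,4) by blast
  then show "E x y" using clique \<open>x \<noteq> y\<close> assms(5,6) by cases auto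
qed

lemma TJ_edge_clique_number_Diff_nonadjacent:
  assumes "simple_graph V E" "TJ_edge V E (clique_number V E) A B"
    and "A - B = {a}" "B - A = {b}"
  shows "\<not> E a b"
proof
  assume "E a b"
  then have "E b a" using assms(1) by (simp add: simple_graph_def)
  have "finite V" using assms(1) by (simp add: simple_graph_def)
  have A: "is_clique V E A" "card A = clique_number V E"
    and B: "is_clique V E B"
    using assms(2) by (simp_all add: TJ_edge_def TJ_vertices_def)
  have "finite A" using A(1) \<open>finite V\<close> finite_subset by (auto simp: is_clique_def)
  have "A \<union> B = insert b A" using assms(3,4) by blast
  then have "card (A \<union> B) = clique_number V E + 1"
    using A(2) \<open>finite A\<close> assms(4) by (metis Diff_iff card_insert_disjoint insertI1 Suc_eq_plus1)
  moreover have "card (A \<union> B) \<le> clique_number V E"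
    using card_le_clique_number[OF \<open>finite V\<close>]
      is_clique_Un_if_Diff_adjacent[OF A(1) B assms(3,4) \<open>E a b\<close> \<open>E b a\<close>] by blast
  ultimately show False by simp
qed

lemma TJ_edge_clique_number_triangle_Int_subset:
  assumes "simple_graph V E"
    and "TJ_edge V E (clique_number V E) A B"
    and "TJ_edge V E (clique_number V E) A C"
    and "TJ_edge V E (clique_number V E) B C"
  shows "A \<inter> B \<subseteq> C"
proof -
  have "finite V" using assms(1) by (simp add: simple_graph_def)
  have clique: "is_clique V E X" "finite X" "card X = clique_number V E"
    if "X \<in> TJ_vertices V E (clique_number V E)" for X
    using that \<open>finite V\<close> finite_subset by (auto simp: TJ_vertices_def is_clique_def)
  have vertices: "A \<in> TJ_vertices V E (clique_number V E)" "B \<in> TJ_vertices V E (clique_number V E)"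
    "C \<in> TJ_vertices V E (clique_number V E)"
    using assms(2,3) by (auto simp: TJ_edge_def)
  obtain a b where ab: "A - B = {a}" "B - A = {b}"
    using assms(2) by (auto simp: TJ_edge_def card_1_singleton_iff)
  have "\<not> E a b" "a \<noteq> b"
    using TJ_edge_clique_number_Diff_nonadjacent[OF assms(1,2) ab] ab by auto
  then have "\<not> (a \<in> C \<and> b \<in> C)"
    using clique(1)[OF vertices(3)] by (auto simp: is_clique_def)
  then show ?thesis
    using Int_subset_if_card_Diff_eq_1[OF clique(2)[OF vertices(1)] clique(2)[OF vertices(2)]
        clique(2)[OF vertices(3)] _ _ ab] clique(3)[OF vertices(1)] clique(3)[OF vertices(2)]
      clique(3)[OF vertices(3)] assms(3,4)
    by (simp add: TJ_edge_def)
qed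

theorem proposition4p3:
  fixes V :: "'a set" and E :: "'a \<Rightarrow> 'a \<Rightarrow> bool"
  assumes "simple_graph V E"
  shows "\<not> has_induced_diamond (TJ_vertices V E (clique_number V E))
                                 (TJ_edge V E (clique_number V E))"
proof
  let ?TJ = "TJ_edge V E (clique_number V E)"
  assume "has_induced_diamond (TJ_vertices V E (clique_number V E)) ?TJ"
  then obtain A B C D where diamond: "distinct [A, B, C, D]" "?TJ A B" "?TJ A C" "?TJ A D"
      "?TJ B C" "?TJ B D" "\<not> ?TJ C D"
    unfolding has_induced_diamond_def by blast
  have common: "A \<inter> B \<subseteq> C \<inter> D"
    using TJ_edge_clique_number_triangle_Int_subset[OF assms] diamond by blast
  have fin: "finite A" "finite C" "finite D" and card: "card C = card A" "card D = card A"
    using diamond(2-4) assms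
    by (auto simp: TJ_edge_def TJ_vertices_def is_clique_def simple_graph_def intro: finite_subset)
  have "card A = card (A \<inter> B) + 1"
    using diamond(2) fin(1) card_mono[of A "A \<inter> B"]
    by (auto simp: TJ_edge_def card_Diff_subset_Int)
  moreover have "C \<noteq> D" using diamond(1) by auto
  ultimately have "card (C - D) = 1" "card (D - C) = 1"
    using card_Diff_eq_1_if_common_subset[OF fin(2,3) common]
      card_Diff_eq_1_if_common_subset[OF fin(3,2)] common card
    by (simp_all add: Int_commute)
  then have "?TJ C D" using diamond(3,4) by (simp add: TJ_edge_def)
  with diamond(7) show False ..
qed

end
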